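(* For every $\beta\in\mathbb{C}$, the linear map $\mathrm{d}_{1-\beta,\beta}:\mathcal{W}\to\mathcal{F}_{1-\beta}\otimes\mathcal{F}_\beta$ defined by $$\mathrm{d}_{1-\beta,\beta}(L_n)=\begin{cases}\sum_{i=0}^{n-1}(i-n\beta)v_i\otimes v_{n-i},&n\geq1;\\ 0,&n=0;\\ -\sum_{i=n}^{-1}(i-n\beta)v_i\otimes v_{n-i},&n\leq -1\end{cases}$$ is a 1-cocycle which is not a 1-coboundary.
   Context: The Witt algebra $\mathcal{W}$ has basis $\{L_n\mid n\in\mathbb{Z}\}$ and bracket $[L_m,L_n]=(m-n)L_{m+n}$. $\mathcal{F}_\alpha$ has basis $\{v_n\}$ with $L_m\cdot v_n=-(\alpha m+n)v_{m+n}$; $\mathcal{F}_\alpha\otimes\mathcal{F}_\beta$ is a $\mathcal{W}$-module via $L_m\cdot(v_i\otimes v_j)=-(i+\alpha m)v_{m+i}\otimes v_j-(j+\beta m)v_i\otimes v_{m+j}$. A 1-cocycle is a linear map $d$ with $d([x,y])=x\cdot d(y)-y\cdot d(x)$; a 1-coboundary is a map $x\mapsto x\cdot v$ for a fixed $v$ in the module. *)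

theory Defs
  imports Complex_Main
begin

text \<open>Elements of the Witt algebra W are finitely supported coefficient functions
  x :: int \<Rightarrow> complex, representing \<Sum>n. x n L_n.  Elements of
  F_alpha \<otimes> F_beta are finitely supported functions v :: int \<times> int \<Rightarrow> complex,
  representing \<Sum>(i,j). v (i,j) v_i \<otimes> v_j.\<close>

definition supp :: "('a \<Rightarrow> complex) \<Rightarrow> 'a set" where
  "supp f = {k. f k \<noteq> 0}"

definition Witt :: "(int \<Rightarrow> complex) set" where
  "Witt = {x. finite (supp x)}"

definition TensorMod :: "(int \<times> int \<Rightarrow> complex) set" where
  "TensorMod = {v. finite (supp v)}"

definition L :: "int \<Rightarrow> int \<Rightarrow> complex" where
  "L n = (\<lambda>k. if k = n then 1 else 0)"

definition witt_bracket :: "(int \<Rightarrow> complex) \<Rightarrow> (int \<Rightarrow> complex) \<Rightarrow> (int \<Rightarrow> complex)" where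
  "witt_bracket x y = (\<lambda>k. \<Sum>m\<in>supp x. \<Sum>n\<in>supp y.
       if m + n = k then of_int (m - n) * x m * y n else 0)"

text \<open>Coefficient of v_i \<otimes> v_j in L_m \<cdot> (v_a \<otimes> v_b) =
  -(a + alpha m) v_{m+a} \<otimes> v_b - (b + beta m) v_a \<otimes> v_{m+b}.\<close>
definition act_coeff :: "complex \<Rightarrow> complex \<Rightarrow> int \<Rightarrow> int \<times> int \<Rightarrow> int \<times> int \<Rightarrow> complex" where
  "act_coeff \<alpha> \<beta> m ab ij =
     (case ab of (a, b) \<Rightarrow> case ij of (i, j) \<Rightarrow>
        (if i = m + a \<and> j = b then - (of_int a + \<alpha> * of_int m) else 0)
      + (if i = a \<and> j = m + b then - (of_int b + \<beta> * of_int m) else 0))"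

definition tensor_act :: "complex \<Rightarrow> complex \<Rightarrow> (int \<Rightarrow> complex) \<Rightarrow> (int \<times> int \<Rightarrow> complex) \<Rightarrow> (int \<times> int \<Rightarrow> complex)" where
  "tensor_act \<alpha> \<beta> x v = (\<lambda>ij. \<Sum>m\<in>supp x. \<Sum>ab\<in>supp v. x m * v ab * act_coeff \<alpha> \<beta> m ab ij)"

definition is_1cocycle :: "complex \<Rightarrow> complex \<Rightarrow> ((int \<Rightarrow> complex) \<Rightarrow> (int \<times> int \<Rightarrow> complex)) \<Rightarrow> bool" where
  "is_1cocycle \<alpha> \<beta> d \<longleftrightarrow>
     (\<forall>x\<in>Witt. \<forall>y\<in>Witt. d (witt_bracket x y) = tensor_act \<alpha> \<beta> x (d y) - tensor_act \<alpha> \<beta> y (d x))"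

definition is_1coboundary :: "complex \<Rightarrow> complex \<Rightarrow> ((int \<Rightarrow> complex) \<Rightarrow> (int \<times> int \<Rightarrow> complex)) \<Rightarrow> bool" where
  "is_1coboundary \<alpha> \<beta> d \<longleftrightarrow> (\<exists>v\<in>TensorMod. \<forall>x\<in>Witt. d x = tensor_act \<alpha> \<beta> x v)"

definition dL :: "complex \<Rightarrow> int \<Rightarrow> int \<times> int \<Rightarrow> complex" where
  "dL \<beta> n = (\<lambda>(i, j).
     if n \<ge> 1 then (if 0 \<le> i \<and> i \<le> n - 1 \<and> j = n - i then of_int i - of_int n * \<beta> else 0)
     else if n = 0 then 0
     else (if n \<le> i \<and> i \<le> -1 \<and> j = n - i then - (of_int i - of_int n * \<beta>) else 0))"

definition d_map :: "complex \<Rightarrow> (int \<Rightarrow> complex) \<Rightarrow> int \<times> int \<Rightarrow> complex" where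
  "d_map \<beta> x = (\<lambda>ij. \<Sum>n\<in>supp x. x n * dL \<beta> n ij)"

end

theory Submission
  imports Defs
begin

text \<open>Both sides of the cocycle identity are bilinear, so it suffices to check it on
  pairs of basis elements L_m, L_n. Writing the coefficient of v_i \<otimes> v_{n-i} in
  d(L_n) uniformly as (i - n\<beta>)(H(i) - H(i - n)) with the Heaviside step H, that
  check becomes a single algebraic identity between step functions.
  If d were the coboundary of v, then d(L_n) = L_n \<cdot> v for all n. As v has finite
  support, for n large the vector L_n \<cdot> v has no component v_i \<otimes> v_{n-i} for
  the two indices i just beyond the support radius, whereas d(L_n) has coefficient
  i - n\<beta> there, and these cannot both vanish.\<close>

definition heaviside :: "int \<Rightarrow> complex" where
  "heaviside k = (if 0 \<le> k then 1 else 0)"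

lemma dL_heaviside:
  "dL \<beta> n (i, j) =
     (if j = n - i then (of_int i - of_int n * \<beta>) * (heaviside i - heaviside (i - n)) else 0)"
  unfolding dL_def heaviside_def by (auto simp: algebra_simps)

definition basis_act ::
    "complex \<Rightarrow> complex \<Rightarrow> int \<Rightarrow> (int \<times> int \<Rightarrow> complex) \<Rightarrow> int \<times> int \<Rightarrow> complex" where
  "basis_act \<alpha> \<beta> m v = (\<lambda>(i, j).
     - (of_int (i - m) + \<alpha> * of_int m) * v (i - m, j)
     - (of_int (j - m) + \<beta> * of_int m) * v (i, j - m))"

lemma dL_cocycle_basis:
  "of_int (m - n) * dL \<beta> (m + n) p =
     basis_act (1 - \<beta>) \<beta> m (dL \<beta> n) p - basis_act (1 - \<beta>) \<beta> n (dL \<beta> m) p"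
proof -
  obtain i j where p: "p = (i, j)" by fastforce
  show ?thesis
  proof (cases "j = m + n - i")
    case True
    have shifts: "i - m - n = i - (m + n)" "i - n - m = i - (m + n)"
      "m + n - i - m = n - i" "m + n - i - n = m - i" by simp_all
    show ?thesis unfolding p basis_act_def True
      by (simp add: dL_heaviside shifts algebra_simps)
  qed (simp add: p basis_act_def dL_heaviside)
qed


lemma act_coeff_eq:
  "act_coeff \<alpha> \<beta> m ab (i, j) =
     (if ab = (i - m, j) then - (of_int (i - m) + \<alpha> * of_int m) else 0)
   + (if ab = (i, j - m) then - (of_int (j - m) + \<beta> * of_int m) else 0)"
  by (cases ab) (auto simp: act_coeff_def)

lemma sum_supp_mult_delta:
  assumes "finite S" "supp v \<subseteq> S"
  shows "(\<Sum>a\<in>S. v a * (if a = p then c else 0)) = v p * c"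
proof -
  have "(\<Sum>a\<in>S. v a * (if a = p then c else 0)) = (\<Sum>a\<in>S. if a = p then v p * c else 0)"
    by (rule sum.cong) auto
  also have "\<dots> = (if p \<in> S then v p * c else 0)"
    using assms(1) by (simp add: sum.delta')
  also have "\<dots> = v p * c"
    using assms(2) by (auto simp: supp_def)
  finally show ?thesis .
qed

lemma sum_act_coeff_eq_basis_act:
  assumes "finite S" "supp v \<subseteq> S"
  shows "(\<Sum>ab\<in>S. v ab * act_coeff \<alpha> \<beta> m ab p) = basis_act \<alpha> \<beta> m v p"
proof -
  obtain i j where p: "p = (i, j)" by fastforce
  have "(\<Sum>ab\<in>S. v ab * act_coeff \<alpha> \<beta> m ab p) =
       (\<Sum>ab\<in>S. v ab * (if ab = (i - m, j) then - (of_int (i - m) + \<alpha> * of_int m) else 0))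
     + (\<Sum>ab\<in>S. v ab * (if ab = (i, j - m) then - (of_int (j - m) + \<beta> * of_int m) else 0))"
    unfolding p act_coeff_eq by (simp add: distrib_left sum.distrib)
  also have "\<dots> = basis_act \<alpha> \<beta> m v p"
    unfolding sum_supp_mult_delta[OF assms] p basis_act_def by (simp add: algebra_simps)
  finally show ?thesis .
qed

lemma tensor_act_eq_sum_basis_act:
  assumes "finite (supp v)"
  shows "tensor_act \<alpha> \<beta> x v p = (\<Sum>m\<in>supp x. x m * basis_act \<alpha> \<beta> m v p)"
  unfolding tensor_act_def
proof (rule sum.cong[OF refl])
  fix m
  have "(\<Sum>ab\<in>supp v. x m * v ab * act_coeff \<alpha> \<beta> m ab p)
      = x m * (\<Sum>ab\<in>supp v. v ab * act_coeff \<alpha> \<beta> m ab p)"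
    by (simp add: sum_distrib_left mult.assoc)
  then show "(\<Sum>ab\<in>supp v. x m * v ab * act_coeff \<alpha> \<beta> m ab p) = x m * basis_act \<alpha> \<beta> m v p"
    using sum_act_coeff_eq_basis_act[OF assms order_refl] by simp
qed

lemma supp_L [simp]: "supp (L n) = {n}"
  by (auto simp: supp_def L_def)

lemma L_in_Witt: "L n \<in> Witt"
  by (simp add: Witt_def)

lemma tensor_act_L:
  "finite (supp v) \<Longrightarrow> tensor_act \<alpha> \<beta> (L n) v = basis_act \<alpha> \<beta> n v"
  by (rule ext) (simp add: tensor_act_eq_sum_basis_act, simp add: L_def)


lemma d_map_L: "d_map \<beta> (L n) = dL \<beta> n"
  by (rule ext) (simp add: d_map_def, simp add: L_def)

lemma d_map_eq_sum_superset:
  "finite S \<Longrightarrow> supp x \<subseteq> S \<Longrightarrow> d_map \<beta> x p = (\<Sum>k\<in>S. x k * dL \<beta> k p)"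
  unfolding d_map_def by (rule sum.mono_neutral_left) (auto simp: supp_def)

lemma finite_supp_dL: "finite (supp (dL \<beta> n))"
proof (rule finite_subset)
  show "supp (dL \<beta> n) \<subseteq> (\<lambda>i. (i, n - i)) ` {-\<bar>n\<bar>..\<bar>n\<bar>}"
  proof
    fix p assume "p \<in> supp (dL \<beta> n)"
    then obtain i j where p: "p = (i, j)" and nz: "dL \<beta> n (i, j) \<noteq> 0"
      by (cases p) (auto simp: supp_def)
    then have "j = n - i" "\<bar>i\<bar> \<le> \<bar>n\<bar>"
      unfolding dL_def by (auto split: if_splits)
    then show "p \<in> (\<lambda>i. (i, n - i)) ` {-\<bar>n\<bar>..\<bar>n\<bar>}"
      unfolding p by (intro image_eqI[where x = i]) (auto simp: abs_le_iff)
  qed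
qed simp

lemma finite_supp_d_map:
  assumes "finite (supp x)"
  shows "finite (supp (d_map \<beta> x))"
proof (rule finite_subset)
  show "supp (d_map \<beta> x) \<subseteq> (\<Union>n\<in>supp x. supp (dL \<beta> n))"
  proof
    fix p assume "p \<in> supp (d_map \<beta> x)"
    then have "(\<Sum>n\<in>supp x. x n * dL \<beta> n p) \<noteq> 0"
      by (simp add: supp_def d_map_def)
    then obtain n where "n \<in> supp x" "x n * dL \<beta> n p \<noteq> 0"
      by (rule sum.not_neutral_contains_not_neutral)
    then show "p \<in> (\<Union>n\<in>supp x. supp (dL \<beta> n))"
      by (auto simp: supp_def)
  qed
  show "finite (\<Union>n\<in>supp x. supp (dL \<beta> n))"
    using assms finite_supp_dL by blast
qed

lemma basis_act_d_map:
  "basis_act \<alpha> \<beta> m (d_map \<beta> x) p = (\<Sum>n\<in>supp x. x n * basis_act \<alpha> \<beta> m (dL \<beta> n) p)"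
proof -
  obtain i j where p: "p = (i, j)" by fastforce
  show ?thesis unfolding p basis_act_def d_map_def
    by (simp add: sum_distrib_left sum_subtractf[symmetric] algebra_simps)
qed

lemma supp_witt_bracket:
  "supp (witt_bracket x y) \<subseteq> (\<lambda>(m, n). m + n) ` (supp x \<times> supp y)"
proof
  fix k assume "k \<in> supp (witt_bracket x y)"
  then have "(\<Sum>m\<in>supp x. \<Sum>n\<in>supp y. if m + n = k then of_int (m - n) * x m * y n else 0) \<noteq> 0"
    by (simp add: supp_def witt_bracket_def)
  then obtain m where m: "m \<in> supp x" and
    inner: "(\<Sum>n\<in>supp y. if m + n = k then of_int (m - n) * x m * y n else (0::complex)) \<noteq> 0"
    by (rule sum.not_neutral_contains_not_neutral)
  from inner obtain n where n: "n \<in> supp y"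
    and "(if m + n = k then of_int (m - n) * x m * y n else (0::complex)) \<noteq> 0"
    by (rule sum.not_neutral_contains_not_neutral)
  then have "k = m + n" by (auto split: if_splits)
  with m n show "k \<in> (\<lambda>(m, n). m + n) ` (supp x \<times> supp y)" by force
qed

lemma d_map_witt_bracket:
  assumes "finite (supp x)" "finite (supp y)"
  shows "d_map \<beta> (witt_bracket x y) p =
    (\<Sum>m\<in>supp x. \<Sum>n\<in>supp y. x m * y n * (of_int (m - n) * dL \<beta> (m + n) p))"
proof -
  define S where "S = (\<lambda>(m, n). m + n) ` (supp x \<times> supp y)"
  have S: "finite S" unfolding S_def using assms by simp
  have "d_map \<beta> (witt_bracket x y) p = (\<Sum>k\<in>S. witt_bracket x y k * dL \<beta> k p)"
    using d_map_eq_sum_superset[OF S] supp_witt_bracket unfolding S_def by blast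
  also have "\<dots> = (\<Sum>k\<in>S. \<Sum>m\<in>supp x. \<Sum>n\<in>supp y.
      if m + n = k then x m * y n * (of_int (m - n) * dL \<beta> k p) else 0)"
    unfolding witt_bracket_def sum_distrib_right by (intro sum.cong refl) simp
  also have "\<dots> = (\<Sum>m\<in>supp x. \<Sum>n\<in>supp y. \<Sum>k\<in>S.
      if m + n = k then x m * y n * (of_int (m - n) * dL \<beta> k p) else 0)"
    by (subst sum.swap, rule sum.cong[OF refl], rule sum.swap)
  also have "\<dots> = (\<Sum>m\<in>supp x. \<Sum>n\<in>supp y. x m * y n * (of_int (m - n) * dL \<beta> (m + n) p))"
  proof (intro sum.cong refl)
    fix m n assume "m \<in> supp x" "n \<in> supp y"
    then have "m + n \<in> S" unfolding S_def by force
    with S show "(\<Sum>k\<in>S. if m + n = k then x m * y n * (of_int (m - n) * dL \<beta> k p) else 0)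
        = x m * y n * (of_int (m - n) * dL \<beta> (m + n) p)"
      by (simp add: sum.delta)
  qed
  finally show ?thesis .
qed


lemma tensor_act_d_map:
  assumes "finite (supp y)"
  shows "tensor_act \<alpha> \<beta> x (d_map \<beta> y) p =
    (\<Sum>m\<in>supp x. \<Sum>n\<in>supp y. x m * y n * basis_act \<alpha> \<beta> m (dL \<beta> n) p)"
  unfolding tensor_act_eq_sum_basis_act[OF finite_supp_d_map[OF assms]] basis_act_d_map
  by (simp add: sum_distrib_left mult.assoc)

lemma d_map_is_1cocycle: "is_1cocycle (1 - \<beta>) \<beta> (d_map \<beta>)"
  unfolding is_1cocycle_def
proof (intro ballI ext)
  fix x y p assume "x \<in> Witt" "y \<in> Witt"
  then have x: "finite (supp x)" and y: "finite (supp y)" by (auto simp: Witt_def)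
  have swapped: "tensor_act (1 - \<beta>) \<beta> y (d_map \<beta> x) p =
      (\<Sum>m\<in>supp x. \<Sum>n\<in>supp y. x m * y n * basis_act (1 - \<beta>) \<beta> n (dL \<beta> m) p)"
    unfolding tensor_act_d_map[OF x] by (subst sum.swap) (simp add: mult.commute)
  show "d_map \<beta> (witt_bracket x y) p =
      (tensor_act (1 - \<beta>) \<beta> x (d_map \<beta> y) - tensor_act (1 - \<beta>) \<beta> y (d_map \<beta> x)) p"
    unfolding fun_diff_def tensor_act_d_map[OF y] swapped d_map_witt_bracket[OF x y]
      sum_subtractf[symmetric] dL_cocycle_basis
    by (simp add: algebra_simps)
qed


lemma finite_supp_bounded:
  assumes "finite (supp v)"
  obtains R :: int where "0 \<le> R" "\<And>a b. v (a, b) \<noteq> 0 \<Longrightarrow> \<bar>a\<bar> \<le> R \<and> \<bar>b\<bar> \<le> R"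
proof
  define R where "R = Max (insert 0 ((\<lambda>(a, b). \<bar>a\<bar> + \<bar>b\<bar>) ` supp v))"
  show "0 \<le> R" unfolding R_def using assms by simp
  fix a b assume "v (a, b) \<noteq> 0"
  then have "\<bar>a\<bar> + \<bar>b\<bar> \<le> R"
    unfolding R_def using assms by (intro Max_ge) (force simp: supp_def)+
  then show "\<bar>a\<bar> \<le> R \<and> \<bar>b\<bar> \<le> R" by linarith
qed

lemma basis_act_vanishes_outside_support:
  assumes "0 \<le> R" "\<And>a b. v (a, b) \<noteq> 0 \<Longrightarrow> \<bar>a\<bar> \<le> R \<and> \<bar>b\<bar> \<le> R"
    and "R < i" "R < n - i"
  shows "basis_act \<alpha> \<beta> n v (i, n - i) = 0"
proof -
  have "\<not> (\<bar>n - i\<bar> \<le> R)" "\<not> (\<bar>i\<bar> \<le> R)"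
    using assms(1,3,4) by auto
  then have "v (i - n, n - i) = 0" "v (i, n - i - n) = 0"
    using assms(2) by fastforce+
  then show ?thesis by (simp add: basis_act_def)
qed

lemma d_map_not_1coboundary: "\<not> is_1coboundary (1 - \<beta>) \<beta> (d_map \<beta>)"
proof
  assume "is_1coboundary (1 - \<beta>) \<beta> (d_map \<beta>)"
  then obtain v where v: "finite (supp v)"
    and cob: "\<And>x. x \<in> Witt \<Longrightarrow> d_map \<beta> x = tensor_act (1 - \<beta>) \<beta> x v"
    unfolding is_1coboundary_def TensorMod_def by blast
  have dL_eq: "dL \<beta> n = basis_act (1 - \<beta>) \<beta> n v" for n
    using cob[OF L_in_Witt] by (simp add: d_map_L tensor_act_L[OF v])
  obtain R where R: "0 \<le> R" "\<And>a b. v (a, b) \<noteq> 0 \<Longrightarrow> \<bar>a\<bar> \<le> R \<and> \<bar>b\<bar> \<le> R"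
    using finite_supp_bounded[OF v] by blast
  define n where "n = 2 * R + 4"
  have vanish: "of_int i - of_int n * \<beta> = 0" if "i = R + 1 \<or> i = R + 2" for i
  proof -
    have "dL \<beta> n (i, n - i) = of_int i - of_int n * \<beta>"
      using that R(1) unfolding dL_def n_def by auto
    moreover have "basis_act (1 - \<beta>) \<beta> n v (i, n - i) = 0"
      using that by (intro basis_act_vanishes_outside_support[OF R]) (auto simp: n_def)
    ultimately show ?thesis by (simp add: dL_eq)
  qed
  have "(of_int (R + 2) - of_int n * \<beta>) - (of_int (R + 1) - of_int n * \<beta>) = (0::complex)"
    using vanish[of "R + 1"] vanish[of "R + 2"] by simp
  then show False by simp
qed

theorem propositionP1:
  fixes \<beta> :: complex
  shows "is_1cocycle (1 - \<beta>) \<beta> (d_map \<beta>) \<and> \<not> is_1coboundary (1 - \<beta>) \<beta> (d_map \<beta>)"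
  using d_map_is_1cocycle d_map_not_1coboundary by blast

end
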